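(* For every function $f_1:\mathbb{N}\times\mathbb{N}\to\mathbb{N}$ there exists a function $f_2:\mathbb{N}\times\mathbb{N}\to\mathbb{N}$ with $f_2\ge f_1$ such that the following holds. Let $G=(V,E)$ be a graph of pathwidth $\mathrm{pw}$ and maximum degree $\Delta$, let $F\subseteq V$ be a set of initially burned vertices with $|F|\le f_1(\mathrm{pw},\Delta)$, and let the budget be any $b\ge1$. Then there exists a protection strategy for the firefighter process on $G$ started from the burned set $F$ such that at most $f_2(\mathrm{pw},\Delta)$ vertices are burned at the end of the process.
   Context: Firefighter process with initial burned set $F$: at step $t=0$ all vertices of $F$ are burned. At every step $t>0$: (1) protection phase: at most $b$ vertices not yet burned become protected; (2) spreading phase: every unprotected vertex adjacent to a burned vertex becomes burned. Burned and protected vertices stay so; the process stops when no new vertex can become burned. A protection strategy specifies which vertices to protect at each step. Pathwidth and maximum degree are the standard notions. *)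

theory Defs
  imports Main
begin

definition graph :: "'a set \<Rightarrow> ('a \<Rightarrow> 'a \<Rightarrow> bool) \<Rightarrow> bool" where
  "graph V E \<longleftrightarrow> finite V \<and> (\<forall>u v. E u v \<longrightarrow> u \<in> V \<and> v \<in> V \<and> u \<noteq> v \<and> E v u)"

definition degree :: "'a set \<Rightarrow> ('a \<Rightarrow> 'a \<Rightarrow> bool) \<Rightarrow> 'a \<Rightarrow> nat" where
  "degree V E v = card {u \<in> V. E v u}"

definition max_degree :: "'a set \<Rightarrow> ('a \<Rightarrow> 'a \<Rightarrow> bool) \<Rightarrow> nat" where
  "max_degree V E = (if V = {} then 0 else Max (degree V E ` V))"

definition path_decomposition :: "'a set \<Rightarrow> ('a \<Rightarrow> 'a \<Rightarrow> bool) \<Rightarrow> 'a set list \<Rightarrow> bool" where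
  "path_decomposition V E Bs \<longleftrightarrow>
     (\<Union>(set Bs)) = V \<and>
     (\<forall>u v. E u v \<longrightarrow> (\<exists>i < length Bs. u \<in> Bs ! i \<and> v \<in> Bs ! i)) \<and>
     (\<forall>v i j k. i \<le> j \<longrightarrow> j \<le> k \<longrightarrow> k < length Bs \<longrightarrow>
        v \<in> Bs ! i \<longrightarrow> v \<in> Bs ! k \<longrightarrow> v \<in> Bs ! j)"

definition has_pd_of_width :: "'a set \<Rightarrow> ('a \<Rightarrow> 'a \<Rightarrow> bool) \<Rightarrow> nat \<Rightarrow> bool" where
  "has_pd_of_width V E k \<longleftrightarrow>
     (\<exists>Bs. path_decomposition V E Bs \<and> (\<forall>B \<in> set Bs. card B \<le> k + 1))"

definition pathwidth :: "'a set \<Rightarrow> ('a \<Rightarrow> 'a \<Rightarrow> bool) \<Rightarrow> nat" where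
  "pathwidth V E = (LEAST k. has_pd_of_width V E k)"

text \<open>Firefighter process. A strategy S gives, for each step t \<ge> 1, the set S t of
  vertices protected at step t.\<close>
fun protected :: "(nat \<Rightarrow> 'a set) \<Rightarrow> nat \<Rightarrow> 'a set" where
  "protected S 0 = {}"
| "protected S (Suc t) = protected S t \<union> S (Suc t)"

fun burned :: "('a \<Rightarrow> 'a \<Rightarrow> bool) \<Rightarrow> 'a set \<Rightarrow> (nat \<Rightarrow> 'a set) \<Rightarrow> nat \<Rightarrow> 'a set" where
  "burned E F S 0 = F"
| "burned E F S (Suc t) = burned E F S t \<union>
     {v. v \<notin> protected S (Suc t) \<and> (\<exists>u \<in> burned E F S t. E u v)}"

definition valid_strategy ::
  "'a set \<Rightarrow> ('a \<Rightarrow> 'a \<Rightarrow> bool) \<Rightarrow> 'a set \<Rightarrow> nat \<Rightarrow> (nat \<Rightarrow> 'a set) \<Rightarrow> bool" where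
  "valid_strategy V E F b S \<longleftrightarrow>
     (\<forall>t. finite (S (Suc t)) \<and> card (S (Suc t)) \<le> b \<and>
          S (Suc t) \<subseteq> V - burned E F S t)"

definition final_burned :: "('a \<Rightarrow> 'a \<Rightarrow> bool) \<Rightarrow> 'a set \<Rightarrow> (nat \<Rightarrow> 'a set) \<Rightarrow> 'a set" where
  "final_burned E F S = (\<Union>t. burned E F S t)"

end

theory Submission
  imports Defs
begin

text \<open>The firefighter protects one vertex per step, according to a fixed list, and the
  bound is proved by induction on the maximum bag size k of a path decomposition.
  With at most n initial fires, let W be the ball of radius s = 2n(k+1) around them.
  Each bag that misses W but is adjacent, in the decomposition, to a bag meeting W
  separates the connected pieces of W, so there are at most 2n such bags. Protecting
  their at most s vertices first (none burns within s steps) traps the fire in the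
  bags meeting W. Once W has burned, the fire goes on in the graph induced on the
  remaining reachable vertices, whose bags have lost a vertex of W each, starting
  from the at most D|W| neighbours of W, where D is the maximum degree; there the
  induction hypothesis applies.\<close>

definition induced :: "('a \<Rightarrow> 'a \<Rightarrow> bool) \<Rightarrow> 'a set \<Rightarrow> 'a \<Rightarrow> 'a \<Rightarrow> bool" where
  "induced E C a b \<longleftrightarrow> E a b \<and> a \<in> C \<and> b \<in> C"

fun spread :: "('a \<Rightarrow> 'a \<Rightarrow> bool) \<Rightarrow> 'a set \<Rightarrow> 'a set \<Rightarrow> nat \<Rightarrow> 'a set" where
  "spread E P F 0 = F"
| "spread E P F (Suc t) = spread E P F t \<union> {v. v \<notin> P \<and> (\<exists>u \<in> spread E P F t. E u v)}"

definition reached :: "('a \<Rightarrow> 'a \<Rightarrow> bool) \<Rightarrow> 'a set \<Rightarrow> 'a set \<Rightarrow> 'a set" where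
  "reached E P F = (\<Union>t. spread E P F t)"

text \<open>The entry xs ! j is protected in step j + 1, so it must not have burned within j
  steps; protecting the whole list from the start does not change the fire up to then.\<close>
definition timely_protection :: "('a \<Rightarrow> 'a \<Rightarrow> bool) \<Rightarrow> 'a set \<Rightarrow> 'a list \<Rightarrow> bool" where
  "timely_protection E F xs \<longleftrightarrow> (\<forall>j < length xs. xs ! j \<notin> spread E (set (take j xs)) F j)"

definition bag_boundary :: "'a set list \<Rightarrow> 'a set \<Rightarrow> nat set" where
  "bag_boundary Bs W = {i. i < length Bs \<and> Bs ! i \<inter> W = {} \<and>
     (\<exists>j \<in> {Suc i, i - 1}. j < length Bs \<and> Bs ! j \<inter> W \<noteq> {})}"

fun burn_bound :: "nat \<Rightarrow> nat \<Rightarrow> nat \<Rightarrow> nat" where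
  "burn_bound 0 D n = 0"
| "burn_bound (Suc k) D n =
     n * (D + 1) ^ (2 * n * Suc k) + burn_bound k D (D * (n * (D + 1) ^ (2 * n * Suc k)))"

lemma spread_mono_time: "t \<le> t' \<Longrightarrow> spread E P F t \<subseteq> spread E P F t'"
  by (induction t') (auto simp: le_Suc_eq)

lemma spread_antimono_protected: "P \<subseteq> P' \<Longrightarrow> spread E P' F t \<subseteq> spread E P F t"
  by (induction t) auto

lemma initial_subset_spread: "F \<subseteq> spread E P F t"
  using spread_mono_time[of 0 t] by simp

lemma spread_subset_reached: "spread E P F t \<subseteq> reached E P F"
  unfolding reached_def by blast

lemma spread_subset_reached_less_protected: "P \<subseteq> P' \<Longrightarrow> spread E P' F t \<subseteq> reached E P F"
  by (rule subset_trans[OF spread_antimono_protected spread_subset_reached])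

lemma spread_subset:
  "(\<forall>u v. E u v \<longrightarrow> v \<in> V) \<Longrightarrow> F \<subseteq> V \<Longrightarrow> spread E P F t \<subseteq> V"
  by (induction t) auto

lemma reached_subset:
  "(\<forall>u v. E u v \<longrightarrow> v \<in> V) \<Longrightarrow> F \<subseteq> V \<Longrightarrow> reached E P F \<subseteq> V"
  unfolding reached_def using spread_subset by (metis UN_least)

lemma spread_notin_protected: "x \<in> spread E P F t \<Longrightarrow> x \<notin> F \<Longrightarrow> x \<notin> P"
  by (induction t) auto

lemma spread_empty [simp]: "spread E P {} t = {}"
  by (induction t) auto

lemma card_neighbours_le:
  assumes "finite A" and "\<forall>v. finite {u. E v u} \<and> card {u. E v u} \<le> D"
  shows "finite {v. \<exists>u \<in> A. E u v} \<and> card {v. \<exists>u \<in> A. E u v} \<le> card A * D"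
proof -
  have eq: "{v. \<exists>u \<in> A. E u v} = (\<Union>u \<in> A. {v. E u v})" by auto
  have "card (\<Union>u \<in> A. {v. E u v}) \<le> (\<Sum>u \<in> A. card {v. E u v})"
    using assms by (intro card_UN_le) auto
  also have "\<dots> \<le> card A * D"
    using assms sum_bounded_above[of A "\<lambda>u. card {v. E u v}" D] by auto
  finally show ?thesis using assms unfolding eq by auto
qed

lemma card_spread_le:
  assumes "finite F" and "\<forall>v. finite {u. E v u} \<and> card {u. E v u} \<le> D"
  shows "finite (spread E P F t) \<and> card (spread E P F t) \<le> card F * (D + 1) ^ t"
proof (induction t)
  case 0
  then show ?case using assms by simp
next
  case (Suc t)
  let ?B = "spread E P F t"
  have sub: "spread E P F (Suc t) \<subseteq> ?B \<union> {v. \<exists>u \<in> ?B. E u v}" by auto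
  have nb: "finite {v. \<exists>u \<in> ?B. E u v} \<and> card {v. \<exists>u \<in> ?B. E u v} \<le> card ?B * D"
    using card_neighbours_le Suc assms by blast
  then have "card (?B \<union> {v. \<exists>u \<in> ?B. E u v}) \<le> card ?B + card ?B * D"
    using card_Un_le[of ?B "{v. \<exists>u \<in> ?B. E u v}"] by linarith
  also have "\<dots> = card ?B * (D + 1)" by simp
  also have "\<dots> \<le> card F * (D + 1) ^ t * (D + 1)"
    using Suc mult_le_mono1 by blast
  also have "\<dots> = card F * (D + 1) ^ Suc t" by (simp add: mult_ac)
  finally show ?case
    using sub nb Suc card_mono[OF _ sub] finite_subset[OF sub] by fastforce
qed

lemma card_induced_neighbours_le:
  "finite {u. E v u} \<Longrightarrow> card {u. induced E C v u} \<le> card {u. E v u}"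
  by (rule card_mono) (auto simp: induced_def)

lemma symp_induced: "\<forall>u v. E u v \<longrightarrow> E v u \<Longrightarrow> symp (induced E C)"
  unfolding induced_def by (auto intro: sympI)

lemma induced_rtranclp_mono:
  "C \<subseteq> C' \<Longrightarrow> (induced E C)\<^sup>*\<^sup>* x y \<Longrightarrow> (induced E C')\<^sup>*\<^sup>* x y"
  by (erule rtranclp_mono[THEN predicate2D, rotated]) (auto simp: induced_def)

lemma spread_connected:
  "x \<in> spread E P F t \<Longrightarrow> \<exists>f \<in> F. (induced E (spread E P F t))\<^sup>*\<^sup>* f x"
proof (induction t arbitrary: x)
  case 0
  then show ?case by auto
next
  case (Suc t)
  have grow: "(induced E (spread E P F t))\<^sup>*\<^sup>* a b \<Longrightarrow> (induced E (spread E P F (Suc t)))\<^sup>*\<^sup>* a b"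
    for a b by (rule induced_rtranclp_mono[OF spread_mono_time]) simp_all
  show ?case
  proof (cases "x \<in> spread E P F t")
    case True
    then show ?thesis using Suc.IH grow by blast
  next
    case False
    then obtain u where u: "u \<in> spread E P F t" "E u x" using Suc.prems by auto
    then obtain f where "f \<in> F" "(induced E (spread E P F (Suc t)))\<^sup>*\<^sup>* f u"
      using Suc.IH grow by blast
    moreover have "induced E (spread E P F (Suc t)) u x"
      using u Suc.prems by (auto simp: induced_def)
    ultimately show ?thesis by (meson rtranclp.rtrancl_into_rtrancl)
  qed
qed

lemma path_decomposition_walk_meets_bags:
  assumes pd: "path_decomposition V E Bs"
    and walk: "(induced E C)\<^sup>*\<^sup>* x y" and "x \<in> C"
    and "a < length Bs" "c < length Bs" "x \<in> Bs ! a" "y \<in> Bs ! c"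
    and "j \<in> {min a c..max a c}"
  shows "Bs ! j \<inter> C \<noteq> {}"
  using walk assms(4-)
proof (induction arbitrary: c rule: rtranclp_induct)
  case base
  then have "x \<in> Bs ! j"
    using pd unfolding path_decomposition_def by (metis atLeastAtMost_iff max_def min_def)
  then show ?case using \<open>x \<in> C\<close> by blast
next
  case (step y z)
  obtain e where e: "e < length Bs" "y \<in> Bs ! e" "z \<in> Bs ! e" "z \<in> C"
    using pd step.hyps(2) unfolding path_decomposition_def induced_def by blast
  show ?case
  proof (cases "j \<in> {min a e..max a e}")
    case True
    then show ?thesis using step e by blast
  next
    case False
    then have "z \<in> Bs ! j"
      using pd e step.prems unfolding path_decomposition_def
      by (metis atLeastAtMost_iff max_def min_def nat_le_linear order_trans)
    then show ?thesis using e by blast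
  qed
qed

text \<open>A fire reaching both q i and q i' through W would give a walk inside W crossing
  the bag i or i', which misses W; so distinct bags of T are reached from distinct fires.\<close>
lemma card_separating_bags_le:
  assumes pd: "path_decomposition V E Bs" and sym: "\<forall>u v. E u v \<longrightarrow> E v u"
    and conn: "\<forall>w \<in> W. \<exists>f \<in> F. (induced E W)\<^sup>*\<^sup>* f w" and "finite F"
    and T: "\<forall>i \<in> T. i < length Bs \<and> Bs ! i \<inter> W = {} \<and> q i < length Bs \<and> Bs ! q i \<inter> W \<noteq> {}"
    and separating: "\<forall>i \<in> T. \<forall>i' \<in> T. i < i' \<longrightarrow> (\<exists>j \<in> {i, i'}. j \<in> {min (q i) (q i')..max (q i) (q i')})"
  shows "card T \<le> card F"
proof -
  define source where
    "source i = (SOME f. f \<in> F \<and> (\<exists>w \<in> W \<inter> Bs ! q i. (induced E W)\<^sup>*\<^sup>* f w))" for i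
  have source: "source i \<in> F \<and> (\<exists>w \<in> W \<inter> Bs ! q i. (induced E W)\<^sup>*\<^sup>* (source i) w)"
    if "i \<in> T" for i
    unfolding source_def by (rule someI_ex) (use that T conn in blast)
  have distinct: "source i \<noteq> source i'" if iT: "i \<in> T" "i' \<in> T" "i < i'" for i i'
  proof
    assume same: "source i = source i'"
    obtain w w' where w: "w \<in> W" "w \<in> Bs ! q i" "w' \<in> W" "w' \<in> Bs ! q i'"
      and "(induced E W)\<^sup>*\<^sup>* (source i) w" "(induced E W)\<^sup>*\<^sup>* (source i') w'"
      using source[OF iT(1)] source[OF iT(2)] by blast
    then have "(induced E W)\<^sup>*\<^sup>* w w'"
      using same sympD[OF symp_rtranclp[OF symp_induced[OF sym]]] by (metis rtranclp_trans)
    moreover obtain j where "j \<in> {i, i'}" "j \<in> {min (q i) (q i')..max (q i) (q i')}"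
      using separating iT by blast
    ultimately show False
      using path_decomposition_walk_meets_bags[OF pd] w T iT by blast
  qed
  have "inj_on source T"
    by (rule inj_onI) (metis distinct linorder_neqE_nat)
  moreover have "source ` T \<subseteq> F" using source by blast
  ultimately show ?thesis using card_inj_on_le \<open>finite F\<close> by blast
qed

lemma card_bag_boundary_le:
  assumes pd: "path_decomposition V E Bs" and sym: "\<forall>u v. E u v \<longrightarrow> E v u"
    and conn: "\<forall>w \<in> W. \<exists>f \<in> F. (induced E W)\<^sup>*\<^sup>* f w" and "finite F"
  shows "card (bag_boundary Bs W) \<le> 2 * card F"
proof -
  define L where "L = {i \<in> bag_boundary Bs W. Suc i < length Bs \<and> Bs ! Suc i \<inter> W \<noteq> {}}"
  define R where "R = {i \<in> bag_boundary Bs W. i - 1 < length Bs \<and> Bs ! (i - 1) \<inter> W \<noteq> {}}"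
  have "card L \<le> card F"
    by (rule card_separating_bags_le[OF pd sym conn \<open>finite F\<close>, where q = Suc])
      (auto simp: L_def bag_boundary_def)
  moreover have "card R \<le> card F"
    by (rule card_separating_bags_le[OF pd sym conn \<open>finite F\<close>, where q = "\<lambda>i. i - 1"])
      (auto simp: R_def bag_boundary_def)
  moreover have "bag_boundary Bs W = L \<union> R"
    by (auto simp: L_def R_def bag_boundary_def)
  ultimately show ?thesis using card_Un_le[of L R] by simp
qed

lemma card_Union_bag_boundary_le:
  assumes pd: "path_decomposition V E Bs" and sym: "\<forall>u v. E u v \<longrightarrow> E v u"
    and conn: "\<forall>w \<in> W. \<exists>f \<in> F. (induced E W)\<^sup>*\<^sup>* f w" and "finite F"
    and bags: "\<forall>B \<in> set Bs. card B \<le> m"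
  shows "card (\<Union>i \<in> bag_boundary Bs W. Bs ! i) \<le> 2 * card F * m"
proof -
  have "finite (bag_boundary Bs W)" unfolding bag_boundary_def by simp
  then have "card (\<Union>i \<in> bag_boundary Bs W. Bs ! i) \<le> (\<Sum>i \<in> bag_boundary Bs W. card (Bs ! i))"
    by (rule card_UN_le)
  also have "\<dots> \<le> card (bag_boundary Bs W) * m"
    using sum_bounded_above[of "bag_boundary Bs W" "\<lambda>i. card (Bs ! i)" m] bags
    unfolding bag_boundary_def by fastforce
  also have "\<dots> \<le> 2 * card F * m"
    using card_bag_boundary_le[OF pd sym conn \<open>finite F\<close>] by (rule mult_le_mono1)
  finally show ?thesis .
qed

lemma exists_boundary_between:
  fixes P :: "nat \<Rightarrow> bool"
  assumes "P a" "\<not> P c"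
  shows "\<exists>j \<in> {min a c..max a c}. \<not> P j \<and> (P (Suc j) \<or> P (j - 1))"
proof (cases "a \<le> c")
  case True
  have up: "a \<le> c \<Longrightarrow> \<not> P c \<Longrightarrow> \<exists>j \<in> {a..c}. \<not> P j \<and> P (j - 1)" for c
  proof (induction c)
    case (Suc c)
    have "a \<le> c" using Suc.prems assms(1) le_Suc_eq by blast
    show ?case
    proof (cases "P c")
      case True
      then show ?thesis using Suc.prems by force
    next
      case False
      then show ?thesis using Suc.IH \<open>a \<le> c\<close> by force
    qed
  qed (use assms in auto)
  show ?thesis using up[OF True assms(2)] True by auto
next
  case False
  have down: "c \<le> a \<Longrightarrow> P a \<Longrightarrow> \<exists>j \<in> {c..a}. \<not> P j \<and> P (Suc j)" for a
  proof (induction a)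
    case (Suc a)
    have "c \<le> a" using Suc.prems assms(2) le_Suc_eq by blast
    show ?case
    proof (cases "P a")
      case True
      then show ?thesis using Suc.IH \<open>c \<le> a\<close> by force
    next
      case False
      then show ?thesis using Suc.prems \<open>c \<le> a\<close> by force
    qed
  qed (use assms in auto)
  show ?thesis using down[OF _ assms(1)] False by auto
qed

lemma reached_within_bags_meeting:
  assumes pd: "path_decomposition V E Bs" and "F \<subseteq> V" "F \<subseteq> W"
    and "y \<in> reached E (\<Union>i \<in> bag_boundary Bs W. Bs ! i) F" "c < length Bs" "y \<in> Bs ! c"
  shows "Bs ! c \<inter> W \<noteq> {}"
proof (rule ccontr)
  assume outside: "\<not> Bs ! c \<inter> W \<noteq> {}"
  define X where "X = (\<Union>i \<in> bag_boundary Bs W. Bs ! i)"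
  obtain t where y: "y \<in> spread E X F t"
    using assms(4) unfolding reached_def X_def[symmetric] by blast
  define C where "C = spread E X F t"
  obtain f where f: "f \<in> F" "(induced E C)\<^sup>*\<^sup>* f y"
    using spread_connected[OF y] unfolding C_def by blast
  have "X \<inter> W = {}" by (auto simp: X_def bag_boundary_def)
  then have CX: "C \<inter> X = {}"
    using spread_notin_protected[of _ E X F t] \<open>F \<subseteq> W\<close> unfolding C_def by blast
  have "f \<in> \<Union>(set Bs)"
    using pd[unfolded path_decomposition_def, THEN conjunct1] f(1) \<open>F \<subseteq> V\<close> by blast
  then obtain a where a: "a < length Bs" "f \<in> Bs ! a" by (auto simp: in_set_conv_nth)
  have "a < length Bs \<and> Bs ! a \<inter> W \<noteq> {}" using a f(1) \<open>F \<subseteq> W\<close> by blast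
  moreover have "\<not> (c < length Bs \<and> Bs ! c \<inter> W \<noteq> {})" using outside by blast
  ultimately obtain j where j: "j \<in> {min a c..max a c}"
    and "\<not> (j < length Bs \<and> Bs ! j \<inter> W \<noteq> {})"
    and "(Suc j < length Bs \<and> Bs ! Suc j \<inter> W \<noteq> {}) \<or> (j - 1 < length Bs \<and> Bs ! (j - 1) \<inter> W \<noteq> {})"
    using exists_boundary_between[of "\<lambda>i. i < length Bs \<and> Bs ! i \<inter> W \<noteq> {}" a c] by blast
  moreover have "j < length Bs" using j a(1) \<open>c < length Bs\<close> by auto
  ultimately have "j \<in> bag_boundary Bs W" unfolding bag_boundary_def by auto
  then have "Bs ! j \<subseteq> X" unfolding X_def by (rule UN_upper)
  moreover have "f \<in> C" using initial_subset_spread[of F E X t] f(1) unfolding C_def by blast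
  then have "Bs ! j \<inter> C \<noteq> {}"
    using path_decomposition_walk_meets_bags[OF pd f(2) _ a(1) assms(5) a(2) assms(6) j] by blast
  ultimately show False using CX by blast
qed

lemma spread_beyond_ball:
  assumes W: "W = spread E {} F s" and V': "V' = reached E X F - W"
    and F': "F' = {v \<in> V'. \<exists>w \<in> W. E w v}"
  shows "spread E (X \<union> Q) F (s + 1 + t) \<subseteq> W \<union> spread (induced E V') Q F' t"
proof (induction t)
  case 0
  have "spread E (X \<union> Q) F s \<subseteq> W" unfolding W by (rule spread_antimono_protected) simp
  moreover have "spread E (X \<union> Q) F (Suc s) \<subseteq> reached E X F"
    by (rule spread_subset_reached_less_protected) simp
  ultimately show ?case unfolding V' F' by auto
next
  case (Suc t)
  show ?case
  proof
    fix x assume x: "x \<in> spread E (X \<union> Q) F (s + 1 + Suc t)"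
    have "x \<in> reached E X F"
      using x spread_subset_reached_less_protected[of X "X \<union> Q"] by blast
    then have x_V': "x \<in> V'" if "x \<notin> W" using that V' by blast
    show "x \<in> W \<union> spread (induced E V') Q F' (Suc t)"
    proof (cases "x \<in> spread E (X \<union> Q) F (s + 1 + t) \<or> x \<in> W")
      case True
      then show ?thesis using Suc.IH by auto
    next
      case False
      then obtain u where u: "u \<in> spread E (X \<union> Q) F (s + 1 + t)" "E u x" "x \<notin> Q"
        using x by auto
      have "spread (induced E V') Q F' t \<subseteq> V'"
        by (rule spread_subset) (auto simp: induced_def F')
      then have "u \<in> W \<and> x \<in> F' \<or> u \<in> spread (induced E V') Q F' t \<and> induced E V' u x"
        using u Suc.IH x_V' False F' unfolding induced_def by blast
      then show ?thesis using initial_subset_spread u(3) by fastforce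
    qed
  qed
qed

lemma reached_beyond_ball:
  assumes "W = spread E {} F s" "V' = reached E X F - W" "F' = {v \<in> V'. \<exists>w \<in> W. E w v}"
  shows "reached E (X \<union> Q) F \<subseteq> W \<union> reached (induced E V') Q F'"
proof
  fix x assume "x \<in> reached E (X \<union> Q) F"
  then obtain t where "x \<in> spread E (X \<union> Q) F t" unfolding reached_def by blast
  moreover have "spread E (X \<union> Q) F t \<subseteq> spread E (X \<union> Q) F (s + 1 + t)"
    by (rule spread_mono_time) simp
  ultimately have "x \<in> spread E (X \<union> Q) F (s + 1 + t)" by blast
  then show "x \<in> W \<union> reached (induced E V') Q F'"
    using spread_beyond_ball[OF assms] spread_subset_reached[of "induced E V'" Q F' t] by blast
qed

lemma timely_protection_append:
  assumes W: "W = spread E {} F s" and V': "V' = reached E (set L) F - W"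
    and F': "F' = {v \<in> V'. \<exists>w \<in> W. E w v}"
    and "set L \<inter> W = {}" "length L \<le> s"
    and timely: "timely_protection (induced E V') F' X'" and "set X' \<subseteq> V'"
  shows "timely_protection E F (L @ X')"
  unfolding timely_protection_def
proof (intro allI impI)
  fix j assume j: "j < length (L @ X')"
  show "(L @ X') ! j \<notin> spread E (set (take j (L @ X'))) F j"
  proof (cases "j < length L")
    case True
    have "spread E (set (take j (L @ X'))) F j \<subseteq> W"
      unfolding W using spread_antimono_protected[of "{}"] spread_mono_time[of j s]
        True \<open>length L \<le> s\<close> by fastforce
    moreover have "(L @ X') ! j \<in> set L" using True by (simp add: nth_append)
    ultimately show ?thesis using \<open>set L \<inter> W = {}\<close> by blast
  next
    case False
    define i where "i = j - length L"
    have i: "j = length L + i" "i < length X'" using False j unfolding i_def by auto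
    have take_j: "set (take j (L @ X')) = set L \<union> set (take i X')" using i(1) by simp
    have "j \<le> s + 1 + i" using i(1) \<open>length L \<le> s\<close> by simp
    then have "spread E (set (take j (L @ X'))) F j \<subseteq> spread E (set L \<union> set (take i X')) F (s + 1 + i)"
      unfolding take_j by (rule spread_mono_time)
    also have "\<dots> \<subseteq> W \<union> spread (induced E V') (set (take i X')) F' i"
      by (rule spread_beyond_ball[OF W V' F'])
    finally have burning:
      "spread E (set (take j (L @ X'))) F j \<subseteq> W \<union> spread (induced E V') (set (take i X')) F' i" .
    have "X' ! i \<notin> W" using nth_mem[OF i(2)] \<open>set X' \<subseteq> V'\<close> V' by blast
    moreover have "X' ! i \<notin> spread (induced E V') (set (take i X')) F' i"
      using timely i(2) unfolding timely_protection_def by blast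
    moreover have "(L @ X') ! j = X' ! i" using i(1) by (simp add: nth_append)
    ultimately show ?thesis using burning by (metis UnE subsetD)
  qed
qed

lemma graph_induced: "graph V E \<Longrightarrow> V' \<subseteq> V \<Longrightarrow> graph V' (induced E V')"
  unfolding graph_def induced_def by (auto intro: finite_subset)

lemma path_decomposition_induced:
  assumes pd: "path_decomposition V E Bs" and "V' \<subseteq> V"
  shows "path_decomposition V' (induced E V') (map (\<lambda>B. B \<inter> V') Bs)"
    (is "path_decomposition _ _ ?Bs'")
proof -
  have "\<Union>(set Bs) = V"
    and edges: "\<And>u v. E u v \<Longrightarrow> \<exists>i < length Bs. u \<in> Bs ! i \<and> v \<in> Bs ! i"
    and interval: "\<And>v i j k. i \<le> j \<Longrightarrow> j \<le> k \<Longrightarrow> k < length Bs \<Longrightarrow>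
      v \<in> Bs ! i \<Longrightarrow> v \<in> Bs ! k \<Longrightarrow> v \<in> Bs ! j"
    using pd unfolding path_decomposition_def by blast+
  then have "\<Union>(set ?Bs') = V'" using \<open>V' \<subseteq> V\<close> by auto
  moreover have "\<exists>i < length ?Bs'. u \<in> ?Bs' ! i \<and> v \<in> ?Bs' ! i" if "induced E V' u v" for u v
    using edges that unfolding induced_def by fastforce
  moreover have "v \<in> ?Bs' ! j"
    if "i \<le> j" "j \<le> k" "k < length ?Bs'" "v \<in> ?Bs' ! i" "v \<in> ?Bs' ! k" for v i j k
    using interval that by auto
  ultimately show ?thesis unfolding path_decomposition_def by blast
qed

text \<open>The bags meeting W lose a vertex of W, the others lose everything.\<close>
lemma card_bags_beyond_ball_le:
  assumes pd: "path_decomposition V E Bs" and "finite V" and "F \<subseteq> V" "F \<subseteq> W"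
    and bags: "\<forall>B \<in> set Bs. card B \<le> Suc k"
    and V': "V' \<subseteq> reached E (\<Union>i \<in> bag_boundary Bs W. Bs ! i) F - W"
  shows "\<forall>B \<in> set (map (\<lambda>B. B \<inter> V') Bs). card B \<le> k"
proof
  fix B assume "B \<in> set (map (\<lambda>B. B \<inter> V') Bs)"
  then obtain i where i: "i < length Bs" "B = Bs ! i \<inter> V'" by (auto simp: in_set_conv_nth)
  have "Bs ! i \<subseteq> V"
    using pd[unfolded path_decomposition_def, THEN conjunct1] nth_mem[OF i(1)] by blast
  then have "finite (Bs ! i)" using \<open>finite V\<close> by (rule finite_subset)
  show "card B \<le> k"
  proof (cases "Bs ! i \<inter> W = {}")
    case True
    then have "B = {}" using reached_within_bags_meeting[OF pd \<open>F \<subseteq> V\<close> \<open>F \<subseteq> W\<close> _ i(1)] i(2) V' by blast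
    then show ?thesis by simp
  next
    case False
    then obtain w where w: "w \<in> Bs ! i" "w \<in> W" by blast
    then have "card B \<le> card (Bs ! i - {w})"
      using i(2) V' \<open>finite (Bs ! i)\<close> by (intro card_mono) auto
    also have "\<dots> \<le> k" using w(1) bags nth_mem[OF i(1)] \<open>finite (Bs ! i)\<close> by fastforce
    finally show ?thesis .
  qed
qed

text \<open>L lists the vertices of the boundary bags of the ball W, at most 2n(k + 1) of them.\<close>
lemma enclosing_protection_list:
  assumes gr: "graph V E" and pd: "path_decomposition V E Bs"
    and bags: "\<forall>B \<in> set Bs. card B \<le> Suc k" and "F \<subseteq> V" "card F \<le> n"
    and "2 * n * Suc k \<le> s" and W: "W = spread E {} F s"
  obtains L where "set L \<subseteq> V" "set L \<inter> W = {}" "length L \<le> s"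
    "\<forall>B \<in> set (map (\<lambda>B. B \<inter> (reached E (set L) F - W)) Bs). card B \<le> k"
proof -
  have "finite V" and sym: "\<forall>u v. E u v \<longrightarrow> E v u" using gr unfolding graph_def by auto
  have "finite F" using \<open>F \<subseteq> V\<close> \<open>finite V\<close> by (rule finite_subset)
  define X where "X = (\<Union>i \<in> bag_boundary Bs W. Bs ! i)"
  have conn: "\<forall>w \<in> W. \<exists>f \<in> F. (induced E W)\<^sup>*\<^sup>* f w"
    unfolding W using spread_connected[of _ E "{}" F s] by blast
  have "card X \<le> 2 * card F * Suc k"
    unfolding X_def by (rule card_Union_bag_boundary_le[OF pd sym conn \<open>finite F\<close> bags])
  also have "\<dots> \<le> 2 * n * Suc k" using \<open>card F \<le> n\<close> by (intro mult_le_mono1 mult_le_mono2)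
  finally have "card X \<le> s" using \<open>2 * n * Suc k \<le> s\<close> by linarith
  have "Bs ! i \<subseteq> V" if "i < length Bs" for i
    using pd[unfolded path_decomposition_def, THEN conjunct1] nth_mem[OF that] by blast
  then have "X \<subseteq> V" by (auto simp: X_def bag_boundary_def)
  have "X \<inter> W = {}" by (auto simp: X_def bag_boundary_def)
  obtain L where L: "set L = X" "distinct L"
    using finite_distinct_list[OF finite_subset[OF \<open>X \<subseteq> V\<close> \<open>finite V\<close>]] by blast
  show thesis
  proof
    show "set L \<subseteq> V" "set L \<inter> W = {}" using L(1) \<open>X \<subseteq> V\<close> \<open>X \<inter> W = {}\<close> by simp_all
    show "length L \<le> s" using L \<open>card X \<le> s\<close> distinct_card by metis
    have "F \<subseteq> W" unfolding W by (rule initial_subset_spread)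
    moreover have "reached E (set L) F - W \<subseteq> reached E X F - W" using L(1) by simp
    ultimately show "\<forall>B \<in> set (map (\<lambda>B. B \<inter> (reached E (set L) F - W)) Bs). card B \<le> k"
      unfolding X_def by (rule card_bags_beyond_ball_le[OF pd \<open>finite V\<close> \<open>F \<subseteq> V\<close> _ bags])
  qed
qed

lemma exists_timely_protection:
  assumes "graph V E" "path_decomposition V E Bs" "\<forall>B \<in> set Bs. card B \<le> k"
    "\<forall>v. card {u. E v u} \<le> D" "F \<subseteq> V" "card F \<le> n"
  shows "\<exists>xs. set xs \<subseteq> V \<and> timely_protection E F xs \<and>
    finite (reached E (set xs) F) \<and> card (reached E (set xs) F) \<le> burn_bound k D n"
  using assms
proof (induction k arbitrary: V E Bs F n)
  case 0
  then have "\<forall>B \<in> set Bs. B = {}"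
    unfolding graph_def path_decomposition_def by (metis Union_upper card_0_eq finite_subset le_zero_eq)
  then have "F = {}" using 0 unfolding path_decomposition_def by auto
  then show ?case by (intro exI[of _ "[]"]) (simp add: reached_def timely_protection_def)
next
  case (Suc k)
  note gr = Suc.prems(1) and pd = Suc.prems(2) and bags = Suc.prems(3) and deg = Suc.prems(4)
  have "F \<subseteq> V" "card F \<le> n" by (fact Suc.prems(5,6))+
  have "finite V" and edges: "\<forall>u v. E u v \<longrightarrow> u \<in> V \<and> v \<in> V"
    using gr unfolding graph_def by auto
  have nbr: "\<forall>v. finite {u. E v u} \<and> card {u. E v u} \<le> D"
    using \<open>finite V\<close> edges deg by (auto intro: finite_subset)
  have "finite F" using \<open>F \<subseteq> V\<close> \<open>finite V\<close> by (rule finite_subset)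
  define s where "s = 2 * n * Suc k"
  define W where "W = spread E {} F s"
  have "2 * n * Suc k \<le> s" by (simp add: s_def)
  obtain L where L: "set L \<subseteq> V" "set L \<inter> W = {}" "length L \<le> s"
    and bags': "\<forall>B \<in> set (map (\<lambda>B. B \<inter> (reached E (set L) F - W)) Bs). card B \<le> k"
    by (rule enclosing_protection_list[OF gr pd bags \<open>F \<subseteq> V\<close> \<open>card F \<le> n\<close> \<open>2 * n * Suc k \<le> s\<close> W_def])
  define V' where "V' = reached E (set L) F - W"
  define F' where "F' = {v \<in> V'. \<exists>w \<in> W. E w v}"
  have "finite W" "card W \<le> card F * (D + 1) ^ s"
    using card_spread_le[OF \<open>finite F\<close> nbr] unfolding W_def by blast+
  moreover have "card F * (D + 1) ^ s \<le> n * (D + 1) ^ s"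
    using \<open>card F \<le> n\<close> by (rule mult_le_mono1)
  ultimately have W: "finite W" "card W \<le> n * (D + 1) ^ s" by linarith+
  have "F' \<subseteq> {v. \<exists>w \<in> W. E w v}" by (auto simp: F'_def)
  then have "card F' \<le> card W * D"
    using card_neighbours_le[OF W(1) nbr] card_mono le_trans by blast
  also have "\<dots> \<le> D * (n * (D + 1) ^ s)" using W(2) by (simp add: mult.commute)
  finally have "card F' \<le> D * (n * (D + 1) ^ s)" .
  moreover have "F' \<subseteq> V'" by (auto simp: F'_def)
  moreover have "card {u. induced E V' v u} \<le> D" for v
    using card_induced_neighbours_le[of E v V'] nbr by (meson le_trans)
  moreover have "V' \<subseteq> V"
    using reached_subset[of E V F "set L"] edges \<open>F \<subseteq> V\<close> unfolding V'_def by blast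
  ultimately obtain X' where X': "set X' \<subseteq> V'" "timely_protection (induced E V') F' X'"
      "finite (reached (induced E V') (set X') F')"
      "card (reached (induced E V') (set X') F') \<le> burn_bound k D (D * (n * (D + 1) ^ s))"
    using Suc.IH[OF graph_induced[OF gr] path_decomposition_induced[OF pd] bags'[folded V'_def]]
    by blast
  have "timely_protection E F (L @ X')"
    using timely_protection_append[OF W_def V'_def F'_def L(2,3) X'(2,1)] .
  moreover have "set (L @ X') \<subseteq> V" using L(1) X'(1) \<open>V' \<subseteq> V\<close> by auto
  moreover have "reached E (set (L @ X')) F \<subseteq> W \<union> reached (induced E V') (set X') F'"
    using reached_beyond_ball[OF W_def V'_def F'_def] by simp
  moreover have "finite (W \<union> reached (induced E V') (set X') F')" using W(1) X'(3) by blast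
  moreover have "card (W \<union> reached (induced E V') (set X') F') \<le> burn_bound (Suc k) D n"
    using card_Un_le[of W "reached (induced E V') (set X') F'"] W(2) X'(4)
    unfolding burn_bound.simps(2)[of k D n, folded s_def] by linarith
  ultimately show ?case by (meson card_mono finite_subset order_trans)
qed

lemma burned_subset_spread: "P \<inter> burned E F S t = {} \<Longrightarrow> burned E F S t \<subseteq> spread E P F t"
  by (induction t) auto

lemma burned_mono: "t \<le> t' \<Longrightarrow> burned E F S t \<subseteq> burned E F S t'"
  by (induction t') (auto simp: le_Suc_eq)

lemma protection_list_strategy:
  assumes "set xs \<subseteq> V" "timely_protection E F xs" "b \<ge> 1"
  shows "\<exists>S. valid_strategy V E F b S \<and> final_burned E F S \<subseteq> reached E (set xs) F"
proof -
  define S where "S t = (case t of 0 \<Rightarrow> {} | Suc t' \<Rightarrow> if t' < length xs then {xs ! t'} else {})" for t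
  have protected: "protected S t = set (take t xs)" for t
    by (induction t) (auto simp: S_def take_Suc_conv_app_nth)
  have safe: "set (take t xs) \<inter> burned E F S t = {} \<and> (t < length xs \<longrightarrow> xs ! t \<notin> burned E F S t)" for t
  proof (induction t)
    case 0
    then show ?case using assms(2) unfolding timely_protection_def by auto
  next
    case (Suc t)
    have "set (take (Suc t) xs) \<subseteq> set (take t xs) \<union> (if t < length xs then {xs ! t} else {})"
      by (auto simp: take_Suc_conv_app_nth)
    then have "set (take (Suc t) xs) \<inter> burned E F S t = {}" using Suc.IH by (auto split: if_splits)
    then have no_burn: "set (take (Suc t) xs) \<inter> burned E F S (Suc t) = {}"
      using protected[of "Suc t"] by auto
    then show ?case
      using burned_subset_spread[OF no_burn] assms(2) unfolding timely_protection_def by blast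
  qed
  have "valid_strategy V E F b S"
    unfolding valid_strategy_def using safe assms(1,3) by (auto simp: S_def)
  moreover have "final_burned E F S \<subseteq> reached E (set xs) F"
  proof
    fix x assume "x \<in> final_burned E F S"
    then obtain t where "x \<in> burned E F S t" unfolding final_burned_def by blast
    moreover have "burned E F S t \<subseteq> burned E F S (max t (length xs))" by (rule burned_mono) simp
    ultimately have "x \<in> burned E F S (max t (length xs))" by blast
    moreover have "set xs \<inter> burned E F S (max t (length xs)) = {}" using safe[of "max t (length xs)"] by simp
    ultimately show "x \<in> reached E (set xs) F"
      using burned_subset_spread spread_subset_reached[of E "set xs" F "max t (length xs)"] by blast
  qed
  ultimately show ?thesis by blast
qed

lemma path_decomposition_of_pathwidth:
  assumes "graph V E"
  obtains Bs where "path_decomposition V E Bs" "\<forall>B \<in> set Bs. card B \<le> Suc (pathwidth V E)"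
proof -
  have "has_pd_of_width V E (card V)"
    using assms unfolding has_pd_of_width_def path_decomposition_def graph_def
    by (intro exI[of _ "[V]"]) auto
  then have "has_pd_of_width V E (pathwidth V E)" unfolding pathwidth_def by (rule LeastI)
  then show ?thesis using that unfolding has_pd_of_width_def by auto
qed

lemma card_neighbours_le_max_degree:
  assumes "graph V E"
  shows "card {u. E v u} \<le> max_degree V E"
proof (cases "v \<in> V")
  case True
  have "{u. E v u} = {u \<in> V. E v u}" using assms unfolding graph_def by auto
  then have "card {u. E v u} = degree V E v" unfolding degree_def by simp
  also have "\<dots> \<le> max_degree V E"
    using True assms unfolding max_degree_def graph_def by auto
  finally show ?thesis .
next
  case False
  then have "{u. E v u} = {}" using assms unfolding graph_def by auto
  then show ?thesis by simp
qed

theorem theorem2: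
  fixes f1 :: "nat \<Rightarrow> nat \<Rightarrow> nat"
  shows "\<exists>f2 :: nat \<Rightarrow> nat \<Rightarrow> nat. (\<forall>p d. f1 p d \<le> f2 p d) \<and>
    (\<forall>(V :: nat set) E F (b :: nat).
       graph V E \<longrightarrow> F \<subseteq> V \<longrightarrow>
       card F \<le> f1 (pathwidth V E) (max_degree V E) \<longrightarrow> b \<ge> 1 \<longrightarrow>
       (\<exists>S. valid_strategy V E F b S \<and>
            card (final_burned E F S) \<le> f2 (pathwidth V E) (max_degree V E)))"
proof (intro exI[of _ "\<lambda>p d. max (f1 p d) (burn_bound (Suc p) d (f1 p d))"] conjI allI impI)
  fix p d show "f1 p d \<le> max (f1 p d) (burn_bound (Suc p) d (f1 p d))" by simp
next
  fix V :: "nat set" and E F and b :: nat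
  assume gr: "graph V E" and "F \<subseteq> V" and cF: "card F \<le> f1 (pathwidth V E) (max_degree V E)"
    and "1 \<le> b"
  obtain Bs where pd: "path_decomposition V E Bs" and bags: "\<forall>B \<in> set Bs. card B \<le> Suc (pathwidth V E)"
    using path_decomposition_of_pathwidth[OF gr] .
  obtain xs where xs: "set xs \<subseteq> V" "timely_protection E F xs" "finite (reached E (set xs) F)"
      "card (reached E (set xs) F)
         \<le> burn_bound (Suc (pathwidth V E)) (max_degree V E) (f1 (pathwidth V E) (max_degree V E))"
    using exists_timely_protection[OF gr pd bags _ \<open>F \<subseteq> V\<close> cF] card_neighbours_le_max_degree[OF gr]
    by blast
  obtain S where "valid_strategy V E F b S" and S: "final_burned E F S \<subseteq> reached E (set xs) F"
    using protection_list_strategy[OF xs(1,2) \<open>1 \<le> b\<close>] by blast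
  moreover have "card (final_burned E F S)
      \<le> burn_bound (Suc (pathwidth V E)) (max_degree V E) (f1 (pathwidth V E) (max_degree V E))"
    using card_mono[OF xs(3) S] xs(4) by linarith
  ultimately show "\<exists>S. valid_strategy V E F b S \<and> card (final_burned E F S)
      \<le> max (f1 (pathwidth V E) (max_degree V E))
           (burn_bound (Suc (pathwidth V E)) (max_degree V E) (f1 (pathwidth V E) (max_degree V E)))"
    by (auto simp: le_max_iff_disj)
qed

end
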